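(* Let $X_1,X_2,\dots$ be i.i.d. exponential random variables with mean $1$, and for $\mu\in\mathbb N$, $t\ge0$ let $\kappa_\mu(t)=\max\{k\in\mathbb N:\sum_{j=1}^kX_j/\mu\le t\}$. Then: (a) there is a constant $C$ such that for all $\mu\in\mathbb N$ and all $0\le s\le t$, $$\frac1{\mu^2}\mathbb E\Big[|\kappa_\mu(t)-\kappa_\mu(s)|\sum_{k=\kappa_\mu(s)}^{\kappa_\mu(t)-1}X_{k+1}^2\Big]\le C\big(\sqrt{|t-s|}+|t-s|^2\big);$$ (b) for every $t\ge0$, $\lim_{\mu\to\infty}\mathbb E\big[\chi_{\{\kappa_\mu(t)\ge6\mu t\}}\kappa_\mu(t)^2\big]=0$. *)

theory Defs
  imports "HOL-Probability.Probability"
begin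

text \<open>kappa X mu t w = max { k :: nat. (sum_{j=1..k} X_j w) / mu <= t }.
  The set is finite almost surely; on the null event where it is infinite we set the value to 0.\<close>
definition kappa :: "(nat \<Rightarrow> 'a \<Rightarrow> real) \<Rightarrow> nat \<Rightarrow> real \<Rightarrow> 'a \<Rightarrow> nat" where
  "kappa X \<mu> t \<omega> =
     (let S = {k::nat. (\<Sum>j=1..k. X j \<omega>) / real \<mu> \<le> t} in if finite S then Max S else 0)"

end

theory Submission
  imports Defs
begin

text \<open>Write \<open>S\<^sub>n = X\<^sub>1 + \<dots> + X\<^sub>n\<close>. An index \<open>k\<close> lies in \<open>[\<kappa>(s), \<kappa>(t))\<close> iff \<open>S\<^sub>k\<^sub>+\<^sub>1 \<in> (\<mu>s, \<mu>t]\<close>,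
  so the quantity in (a) is the double sum over pairs \<open>(k, j)\<close> of
  \<open>1[S\<^sub>k\<^sub>+\<^sub>1 \<in> I] 1[S\<^sub>j\<^sub>+\<^sub>1 \<in> I] X\<^sub>k\<^sub>+\<^sub>1\<^sup>2\<close> with \<open>I = (\<mu>s, \<mu>t]\<close>. Split the pairs into
  \<open>j = k\<close>, \<open>j > k\<close> and \<open>j < k\<close>. In each case independence of disjoint blocks of the \<open>X\<^sub>i\<close>
  factors the expectation, and the renewal identity \<open>\<Sum>\<^sub>n P(S\<^sub>n \<in> J) = |J \<inter> [0, \<infinity>)|\<close>
  (the Erlang densities sum to \<open>1\<close> on \<open>[0, \<infinity>)\<close>) bounds every free summation by the length
  \<open>L = \<mu>(t - s)\<close>. This gives the bound \<open>6L + 6L\<^sup>2\<close>, hence (a) with \<open>C = 12\<close>.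

  For (b), on \<open>{\<kappa> \<ge> 6\<mu>t}\<close> one has \<open>\<kappa>\<^sup>2 \<le> \<Sum>\<^sub>j\<^sub>,\<^sub>k 1[S\<^sub>n\<^sub>(\<^sub>j\<^sub>,\<^sub>k\<^sub>) \<le> \<mu>t]\<close> with
  \<open>n(j, k) = max(j + 1, k + 1, \<lceil>6\<mu>t\<rceil>)\<close>, and the Chernoff bound \<open>P(S\<^sub>n \<le> c) \<le> e\<^sup>c 2\<^sup>-\<^sup>n\<close> makes
  the expectation decay geometrically in \<open>\<mu>\<close>, because \<open>e \<cdot> 2\<^sup>-\<^sup>2 < 1\<close>.\<close>

section \<open>Double series\<close>

lemma suminf_ennreal_swap:
  "(\<Sum>i. \<Sum>j. f i j :: ennreal) = (\<Sum>j. \<Sum>i. f i j)"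
proof -
  have "(\<Sum>i. \<Sum>j. f i j) = (\<integral>\<^sup>+i. (\<Sum>j. f i j) \<partial>count_space UNIV)"
    by (simp add: nn_integral_count_space_nat)
  also have "\<dots> = (\<Sum>j. \<integral>\<^sup>+i. f i j \<partial>count_space UNIV)"
    by (rule nn_integral_suminf) auto
  finally show ?thesis
    by (simp add: nn_integral_count_space_nat)
qed

lemma suminf_ennreal_split_diagonal:
  "(\<Sum>i. \<Sum>j. f i j :: ennreal) =
     (\<Sum>i. f i i) + (\<Sum>i. \<Sum>n. f i (n + Suc i)) + (\<Sum>j. \<Sum>n. f (n + Suc j) j)"
proof -
  have row: "(\<Sum>j. f i j) = f i i + (\<Sum>n. f i (n + Suc i)) + (\<Sum>j<i. f i j)" for i
    using suminf_offset[OF summableI, of "f i" "Suc i"] by (simp add: ac_simps)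
  have below: "(\<Sum>i. \<Sum>j<i. f i j) = (\<Sum>j. \<Sum>n. f (n + Suc j) j)"
  proof -
    have "(\<Sum>i. \<Sum>j<i. f i j) = (\<Sum>i. \<Sum>j. if j < i then f i j else 0)"
      by (intro suminf_cong, subst suminf_finite[where N="{..<_}"]) auto
    also have "\<dots> = (\<Sum>j. \<Sum>i. if j < i then f i j else 0)"
      by (rule suminf_ennreal_swap)
    also have "\<dots> = (\<Sum>j. \<Sum>n. f (n + Suc j) j)"
    proof (rule suminf_cong)
      fix j
      show "(\<Sum>i. if j < i then f i j else 0) = (\<Sum>n. f (n + Suc j) j)"
        using suminf_offset[OF summableI, of "\<lambda>i. if j < i then f i j else 0" "Suc j"] by simp
    qed
    finally show ?thesis .
  qed
  show ?thesis
    unfolding row below[symmetric] by (simp add: suminf_add[symmetric])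
qed

section \<open>The counting function\<close>

lemma le_kappa_iff:
  assumes nonneg: "\<forall>i\<ge>1. 0 \<le> X i \<omega>" and "0 < \<mu>" and "0 \<le> t"
    and fin: "finite {k. (\<Sum>j=1..k. X j \<omega>) / real \<mu> \<le> t}"
  shows "(\<Sum>j=1..k. X j \<omega>) \<le> real \<mu> * t \<longleftrightarrow> k \<le> kappa X \<mu> t \<omega>"
proof -
  define T where "T = {k. (\<Sum>j=1..k. X j \<omega>) / real \<mu> \<le> t}"
  have mem_T: "k' \<in> T \<longleftrightarrow> (\<Sum>j=1..k'. X j \<omega>) \<le> real \<mu> * t" for k'
    using \<open>0 < \<mu>\<close> by (simp add: T_def pos_divide_le_eq mult.commute)
  have "0 \<in> T" using \<open>0 \<le> t\<close> by (simp add: T_def)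
  then have Max_T: "Max T \<in> T"
    using fin unfolding T_def[symmetric] by (intro Max_in) auto
  have kappa_eq: "kappa X \<mu> t \<omega> = Max T"
    using fin by (simp add: kappa_def T_def Let_def)
  show ?thesis
  proof
    assume "(\<Sum>j=1..k. X j \<omega>) \<le> real \<mu> * t"
    then have "k \<in> T" by (simp add: mem_T)
    with fin show "k \<le> kappa X \<mu> t \<omega>"
      unfolding kappa_eq T_def[symmetric] by (rule Max_ge)
  next
    assume "k \<le> kappa X \<mu> t \<omega>"
    then have "(\<Sum>j=1..k. X j \<omega>) \<le> (\<Sum>j=1..Max T. X j \<omega>)"
      using nonneg unfolding kappa_eq by (intro sum_mono2) auto
    with Max_T show "(\<Sum>j=1..k. X j \<omega>) \<le> real \<mu> * t"
      by (simp add: mem_T)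
  qed
qed

lemma kappa_range_eq:
  assumes nonneg: "\<forall>i\<ge>1. 0 \<le> X i \<omega>" and "0 < \<mu>" and "0 \<le> s" and "s \<le> t"
    and fin: "finite {k. (\<Sum>j=1..k. X j \<omega>) / real \<mu> \<le> t}"
  shows "{k. (\<Sum>j=1..Suc k. X j \<omega>) \<in> {real \<mu> * s<..real \<mu> * t}} =
    {kappa X \<mu> s \<omega>..<kappa X \<mu> t \<omega>}"
proof -
  have "{k. (\<Sum>j=1..k. X j \<omega>) / real \<mu> \<le> s} \<subseteq> {k. (\<Sum>j=1..k. X j \<omega>) / real \<mu> \<le> t}"
    using \<open>s \<le> t\<close> by auto
  then have "finite {k. (\<Sum>j=1..k. X j \<omega>) / real \<mu> \<le> s}"
    using fin by (rule finite_subset)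
  then have s_iff: "(\<Sum>j=1..n. X j \<omega>) \<le> real \<mu> * s \<longleftrightarrow> n \<le> kappa X \<mu> s \<omega>"
    and t_iff: "(\<Sum>j=1..n. X j \<omega>) \<le> real \<mu> * t \<longleftrightarrow> n \<le> kappa X \<mu> t \<omega>" for n
    using le_kappa_iff[where X=X and \<omega>=\<omega> and \<mu>=\<mu>, OF nonneg \<open>0 < \<mu>\<close>] fin
      \<open>0 \<le> s\<close> \<open>s \<le> t\<close> by auto
  show ?thesis
  proof (rule set_eqI)
    fix k
    show "k \<in> {k. (\<Sum>j=1..Suc k. X j \<omega>) \<in> {real \<mu> * s<..real \<mu> * t}} \<longleftrightarrow>
      k \<in> {kappa X \<mu> s \<omega>..<kappa X \<mu> t \<omega>}"
      using s_iff[of "Suc k"] t_iff[of "Suc k"] by (auto simp: not_le Suc_le_eq)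
  qed
qed

lemma kappa_increment_le_double_sum:
  assumes nonneg: "\<forall>i\<ge>1. 0 \<le> X i \<omega>" and "0 < \<mu>" and "0 \<le> s" and "s \<le> t"
  shows "ennreal (\<bar>real (kappa X \<mu> t \<omega>) - real (kappa X \<mu> s \<omega>)\<bar> *
      (\<Sum>k\<in>{kappa X \<mu> s \<omega>..<kappa X \<mu> t \<omega>}. (X (k + 1) \<omega>)\<^sup>2))
    \<le> (\<Sum>k. \<Sum>j. ennreal (indicator {real \<mu> * s<..real \<mu> * t} (\<Sum>i=1..Suc k. X i \<omega>) *
        indicator {real \<mu> * s<..real \<mu> * t} (\<Sum>i=1..Suc j. X i \<omega>) * (X (Suc k) \<omega>)\<^sup>2))"
    (is "?lhs \<le> _")
proof (cases "finite {k. (\<Sum>j=1..k. X j \<omega>) / real \<mu> \<le> t}")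
  case False
  then have "kappa X \<mu> t \<omega> = 0" by (simp add: kappa_def)
  then show ?thesis by simp
next
  case True
  define F where "F k j = ennreal (indicator {real \<mu> * s<..real \<mu> * t} (\<Sum>i=1..Suc k. X i \<omega>) *
        indicator {real \<mu> * s<..real \<mu> * t} (\<Sum>i=1..Suc j. X i \<omega>) * (X (Suc k) \<omega>)\<^sup>2)" for k j
  define R where "R = {kappa X \<mu> s \<omega>..<kappa X \<mu> t \<omega>}"
  have R_eq: "R = {k. (\<Sum>i=1..Suc k. X i \<omega>) \<in> {real \<mu> * s<..real \<mu> * t}}"
    unfolding R_def by (rule kappa_range_eq[where X=X and \<omega>=\<omega>, OF nonneg assms(2-4) True, symmetric])
  have "?lhs = ennreal (of_nat (card R) * (\<Sum>k\<in>R. (X (Suc k) \<omega>)\<^sup>2))"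
  proof (cases "kappa X \<mu> s \<omega> \<le> kappa X \<mu> t \<omega>")
    case True
    then have "\<bar>real (kappa X \<mu> t \<omega>) - real (kappa X \<mu> s \<omega>)\<bar> = real (card R)"
      by (simp add: R_def)
    then show ?thesis
      by (simp add: R_def[symmetric])
  next
    case False
    then show ?thesis
      unfolding R_def by (simp only: atLeastLessThan_empty not_le sum.empty card.empty) simp
  qed
  also have "\<dots> = of_nat (card R) * (\<Sum>k\<in>R. ennreal ((X (Suc k) \<omega>)\<^sup>2))"
    by (simp add: ennreal_mult' sum_nonneg ennreal_of_nat_eq_real_of_nat)
  also have "\<dots> = (\<Sum>k\<in>R. \<Sum>j\<in>R. ennreal ((X (Suc k) \<omega>)\<^sup>2))"
    by (simp only: sum_distrib_left sum_constant mult.commute)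
  also have "\<dots> = (\<Sum>k\<in>R. \<Sum>j\<in>R. F k j)"
    by (intro sum.cong refl) (simp add: F_def R_eq)
  also have "\<dots> \<le> (\<Sum>k. \<Sum>j. F k j)"
    by (intro order.trans[OF sum_mono sum_le_suminf] sum_le_suminf summableI) (auto simp: R_def)
  finally show ?thesis
    by (simp only: F_def)
qed

lemma kappa_square_le_double_sum:
  assumes nonneg: "\<forall>i\<ge>1. 0 \<le> X i \<omega>" and "0 < \<mu>" and "0 \<le> t"
  shows "ennreal (indicator {\<omega>'. real (kappa X \<mu> t \<omega>') \<ge> 6 * real \<mu> * t} \<omega> *
      (real (kappa X \<mu> t \<omega>))\<^sup>2)
    \<le> (\<Sum>j. \<Sum>k. ennreal (indicator {..real \<mu> * t}
        (\<Sum>i=1..max (max (Suc j) (Suc k)) (nat \<lceil>6 * real \<mu> * t\<rceil>). X i \<omega>)))"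
    (is "?lhs \<le> _")
proof (cases "finite {k. (\<Sum>j=1..k. X j \<omega>) / real \<mu> \<le> t} \<and>
    6 * real \<mu> * t \<le> real (kappa X \<mu> t \<omega>)")
  case False
  then consider "infinite {k. (\<Sum>j=1..k. X j \<omega>) / real \<mu> \<le> t}"
    | "real (kappa X \<mu> t \<omega>) < 6 * real \<mu> * t"
    by fastforce
  then have "?lhs = 0"
    by cases (simp_all add: kappa_def)
  then show ?thesis
    by (metis zero_le)
next
  case True
  define F where "F j k = ennreal (indicator {..real \<mu> * t}
        (\<Sum>i=1..max (max (Suc j) (Suc k)) (nat \<lceil>6 * real \<mu> * t\<rceil>). X i \<omega>))" for j k
  define N where "N = kappa X \<mu> t \<omega>"
  have "nat \<lceil>6 * real \<mu> * t\<rceil> \<le> N"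
    using True by (simp add: N_def nat_le_iff ceiling_le_iff)
  then have F_eq_1: "F j k = 1" if "j < N" "k < N" for j k
    using that le_kappa_iff[where X=X and \<omega>=\<omega>, OF nonneg \<open>0 < \<mu>\<close> \<open>0 \<le> t\<close>] True
    by (simp add: F_def N_def)
  have "?lhs = (\<Sum>j<N. \<Sum>k<N. 1)"
    using True by (simp add: N_def power2_eq_square ennreal_of_nat_eq_real_of_nat ennreal_mult)
  also have "\<dots> = (\<Sum>j<N. \<Sum>k<N. F j k)"
    by (intro sum.cong refl) (simp add: F_eq_1)
  also have "\<dots> \<le> (\<Sum>j. \<Sum>k. F j k)"
    by (intro order.trans[OF sum_mono sum_le_suminf] sum_le_suminf summableI) auto
  finally show ?thesis
    by (simp only: F_def)
qed

lemma exponential_density_mult_square_le: "exponential_density 1 x * x\<^sup>2 \<le> 2"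
proof (cases "x < 0")
  case False
  then have "x\<^sup>2 \<le> 2 * exp x"
    using exp_lower_Taylor_quadratic[of x] by simp
  then have "exp (- x) * x\<^sup>2 \<le> exp (- x) * (2 * exp x)"
    by (intro mult_left_mono) auto
  also have "\<dots> = 2"
    by (simp add: exp_minus)
  finally show ?thesis
    using False by (simp add: erlang_density_def)
qed (simp add: erlang_density_def)

lemma rescaled_increment_bound_le:
  fixes h \<mu> :: real
  assumes "0 \<le> h" and "1 \<le> \<mu>"
  shows "(6 * (\<mu> * h) + 6 * (\<mu> * h)\<^sup>2) / \<mu>\<^sup>2 \<le> 12 * (sqrt h + h\<^sup>2)"
proof -
  have "h \<le> sqrt h + h\<^sup>2"
  proof (cases "h \<le> 1")
    case True
    then have "sqrt h * sqrt h \<le> sqrt h * 1"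
      using assms(1) by (intro mult_left_mono) auto
    then show ?thesis
      using assms(1) by (simp add: add_increasing2)
  next
    case False
    then have "h * 1 \<le> h * h"
      by (intro mult_left_mono) auto
    then show ?thesis
      using assms(1) by (simp add: power2_eq_square add_increasing)
  qed
  have "(6 * (\<mu> * h) + 6 * (\<mu> * h)\<^sup>2) / \<mu>\<^sup>2 = 6 * (h / \<mu>) + 6 * h\<^sup>2"
    using assms(2) by (simp add: field_simps power2_eq_square)
  also have "\<dots> \<le> 6 * h + 6 * h\<^sup>2"
    using assms by (simp add: divide_le_eq mult_le_cancel_left1)
  also have "\<dots> \<le> 12 * (sqrt h + h\<^sup>2)"
    using \<open>h \<le> sqrt h + h\<^sup>2\<close> real_sqrt_ge_zero[OF assms(1)] zero_le_power2[of h] by (smt (verit))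
  finally show ?thesis .
qed

lemma one_less_two_ln_two: "1 < 2 * ln (2::real)"
proof -
  have "exp 1 < (4::real)"
    using exp_le by simp
  then have "1 < ln (4::real)"
    by (metis exp_less_cancel_iff exp_ln_iff zero_less_numeral)
  also have "ln (4::real) = 2 * ln 2"
    using ln_realpow[of 2 2] by simp
  finally show ?thesis .
qed

lemma half_power_max_le:
  fixes \<rho> :: real
  assumes "0 < \<rho>" and "\<rho> < 1" and "\<rho> ^ 3 = 1 / 2"
  shows "(1 / 2) ^ max (max i j) m \<le> \<rho> ^ i * \<rho> ^ j * \<rho> ^ m"
proof -
  have "(1 / 2) ^ max (max i j) m = \<rho> ^ (3 * max (max i j) m)"
    by (simp add: power_mult assms(3))
  also have "\<dots> \<le> \<rho> ^ (i + j + m)"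
    using assms by (intro power_decreasing) auto
  finally show ?thesis
    by (simp add: power_add)
qed

lemma exp_mult_power_cube_root_half_le:
  assumes "6 * real \<mu> * t \<le> real m"
  shows "exp (real \<mu> * t) * exp (- ln 2 / 3) ^ m \<le> exp ((1 - 2 * ln 2) * t) ^ \<mu>"
proof -
  have "exp (- ln 2 / 3) ^ m \<le> exp (6 * real \<mu> * t * (- ln 2 / 3))"
    unfolding exp_of_nat_mult[symmetric] using assms by (intro exp_mono mult_right_mono_neg) auto
  then have "exp (real \<mu> * t) * exp (- ln 2 / 3) ^ m \<le>
      exp (real \<mu> * t) * exp (6 * real \<mu> * t * (- ln 2 / 3))"
    by (intro mult_left_mono) auto
  also have "\<dots> = exp ((1 - 2 * ln 2) * t) ^ \<mu>"
    by (simp add: exp_of_nat_mult[symmetric] exp_add[symmetric] algebra_simps)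
  finally show ?thesis .
qed

lemma suminf_ennreal_geometric_Suc:
  fixes \<rho> :: real
  assumes "0 \<le> \<rho>" and "\<rho> < 1"
  shows "(\<Sum>j. ennreal (\<rho> ^ Suc j)) = ennreal (\<rho> / (1 - \<rho>))"
proof (rule suminf_ennreal_eq)
  show "(\<lambda>j. \<rho> ^ Suc j) sums (\<rho> / (1 - \<rho>))"
    using sums_mult[OF geometric_sums[of \<rho>], of \<rho>] assms by simp
qed (use assms in auto)

section \<open>Independent exponential variables\<close>

lemma (in prob_space) nn_integral_indep_var:
  assumes indep: "indep_var N Y N' Z"
    and g: "(\<lambda>(y, z). g y z) \<in> borel_measurable (N \<Otimes>\<^sub>M N')"
  shows "(\<integral>\<^sup>+\<omega>. g (Y \<omega>) (Z \<omega>) \<partial>M) = (\<integral>\<^sup>+\<omega>'. \<integral>\<^sup>+\<omega>. g (Y \<omega>) (Z \<omega>') \<partial>M \<partial>M)"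
proof -
  have Y[measurable]: "Y \<in> measurable M N" and Z[measurable]: "Z \<in> measurable M N'"
    and joint: "distr M N Y \<Otimes>\<^sub>M distr M N' Z = distr M (N \<Otimes>\<^sub>M N') (\<lambda>\<omega>. (Y \<omega>, Z \<omega>))"
    using indep unfolding indep_var_distribution_eq by auto
  interpret pair_sigma_finite "distr M N Y" "distr M N' Z"
    by (intro pair_sigma_finite.intro prob_space_imp_sigma_finite prob_space_distr Y Z)
  note g[measurable]
  have "(\<integral>\<^sup>+\<omega>. g (Y \<omega>) (Z \<omega>) \<partial>M) = (\<integral>\<^sup>+p. (\<lambda>(y, z). g y z) p \<partial>distr M (N \<Otimes>\<^sub>M N') (\<lambda>\<omega>. (Y \<omega>, Z \<omega>)))"
    by (subst nn_integral_distr) auto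
  also have "\<dots> = (\<integral>\<^sup>+z. \<integral>\<^sup>+y. g y z \<partial>distr M N Y \<partial>distr M N' Z)"
    unfolding joint[symmetric] by (subst nn_integral_snd[symmetric]) (auto cong: measurable_cong_sets)
  also have "\<dots> = (\<integral>\<^sup>+z. \<integral>\<^sup>+\<omega>. g (Y \<omega>) z \<partial>M \<partial>distr M N' Z)"
    by (intro nn_integral_cong) (simp add: nn_integral_distr)
  also have "\<dots> = (\<integral>\<^sup>+\<omega>'. \<integral>\<^sup>+\<omega>. g (Y \<omega>) (Z \<omega>') \<partial>M \<partial>M)"
    by (subst nn_integral_distr) auto
  finally show ?thesis .
qed

lemma (in prob_space) nn_integral_indep_var_mult:
  assumes "indep_var N Y N' Z" and "f \<in> borel_measurable N" and "g \<in> borel_measurable N'"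
  shows "(\<integral>\<^sup>+\<omega>. f (Y \<omega>) * g (Z \<omega>) \<partial>M) = (\<integral>\<^sup>+\<omega>. f (Y \<omega>) \<partial>M) * (\<integral>\<^sup>+\<omega>. g (Z \<omega>) \<partial>M)"
proof -
  have Y: "random_variable N Y" and Z: "random_variable N' Z"
    using assms(1) by (auto dest: indep_var_rv1 indep_var_rv2)
  have "(\<integral>\<^sup>+\<omega>. f (Y \<omega>) * g (Z \<omega>) \<partial>M) = (\<integral>\<^sup>+\<omega>'. \<integral>\<^sup>+\<omega>. f (Y \<omega>) * g (Z \<omega>') \<partial>M \<partial>M)"
    using assms by (intro nn_integral_indep_var) auto
  also have "\<dots> = (\<integral>\<^sup>+\<omega>'. (\<integral>\<^sup>+\<omega>. f (Y \<omega>) \<partial>M) * g (Z \<omega>') \<partial>M)"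
    using Y assms(2) by (simp add: nn_integral_multc)
  also have "\<dots> = (\<integral>\<^sup>+\<omega>. f (Y \<omega>) \<partial>M) * (\<integral>\<^sup>+\<omega>. g (Z \<omega>) \<partial>M)"
    using Z assms(3) by (subst nn_integral_cmult) auto
  finally show ?thesis .
qed

locale iid_exponential = prob_space M for M :: "'a measure" +
  fixes X :: "nat \<Rightarrow> 'a \<Rightarrow> real"
  assumes indep_X: "indep_vars (\<lambda>_. borel) X {1..}"
    and distributed_X: "\<And>i. i \<ge> 1 \<Longrightarrow> distributed M lborel (X i) (exponential_density 1)"
begin

definition partial_sum :: "nat \<Rightarrow> 'a \<Rightarrow> real" where
  "partial_sum n \<omega> = (\<Sum>i=1..n. X i \<omega>)"

definition block_sum :: "nat \<Rightarrow> nat \<Rightarrow> 'a \<Rightarrow> real" where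
  "block_sum r n \<omega> = (\<Sum>i=Suc r..r + n. X i \<omega>)"

lemma partial_sum_eq_block_sum: "partial_sum n = block_sum 0 n"
  by (simp add: fun_eq_iff partial_sum_def block_sum_def)

lemma partial_sum_add: "partial_sum (r + n) \<omega> = partial_sum r \<omega> + block_sum r n \<omega>"
  unfolding partial_sum_def block_sum_def by (subst sum.ub_add_nat) auto

lemma block_sum_Suc: "block_sum r (Suc n) \<omega> = block_sum r n \<omega> + X (Suc (r + n)) \<omega>"
  by (simp add: block_sum_def)

lemma measurable_X [measurable]: "i \<ge> 1 \<Longrightarrow> X i \<in> borel_measurable M"
  using distributed_X distributed_measurable by fastforce

lemma measurable_block_sum [measurable]: "block_sum r n \<in> borel_measurable M"
  unfolding block_sum_def by measurable

lemma measurable_partial_sum [measurable]: "partial_sum n \<in> borel_measurable M"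
  unfolding partial_sum_eq_block_sum by measurable

lemma nn_integral_X:
  assumes "i \<ge> 1" and "g \<in> borel_measurable borel"
  shows "(\<integral>\<^sup>+\<omega>. g (X i \<omega>) \<partial>M) = (\<integral>\<^sup>+x. ennreal (exponential_density 1 x) * g x \<partial>lborel)"
  using assms by (subst distributed_nn_integral[OF distributed_X]) auto

lemma AE_X_nonneg: "AE \<omega> in M. \<forall>i\<ge>1. 0 \<le> X i \<omega>"
proof (subst AE_all_countable, intro allI)
  fix i :: nat
  show "AE \<omega> in M. 1 \<le> i \<longrightarrow> 0 \<le> X i \<omega>"
  proof (cases "1 \<le> i")
    case True
    have "AE x in distr M lborel (X i). 0 \<le> x"
      unfolding distributed_distr_eq_density[OF distributed_X[OF True]]
      by (subst AE_density) (auto simp: erlang_density_def)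
    with True show ?thesis
      by (auto dest!: AE_distrD[rotated])
  qed simp
qed

lemma nn_integral_X_square: "i \<ge> 1 \<Longrightarrow> (\<integral>\<^sup>+\<omega>. ennreal ((X i \<omega>)\<^sup>2) \<partial>M) = 2"
  using nn_integral_X[of i "\<lambda>x. ennreal (x\<^sup>2)"] nn_integral_erlang_ith_moment[of 1 0 2]
  by (simp add: ennreal_mult'')

lemma nn_integral_exp_neg_X: "i \<ge> 1 \<Longrightarrow> (\<integral>\<^sup>+\<omega>. ennreal (exp (- X i \<omega>)) \<partial>M) = ennreal (1 / 2)"
proof -
  assume "i \<ge> 1"
  have "ennreal (exponential_density 1 x) * ennreal (exp (- x)) =
      ennreal (1 / 2) * ennreal (erlang_density 0 2 x * x ^ 0)" for x :: real
  proof -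
    have "ennreal (exponential_density 1 x) * ennreal (exp (- x)) =
        ennreal (exponential_density 1 x * exp (- x))"
      by (simp add: ennreal_mult)
    also have "exponential_density 1 x * exp (- x) = 1 / 2 * (erlang_density 0 2 x * x ^ 0)"
      by (simp add: erlang_density_def exp_add[symmetric])
    also have "ennreal (1 / 2 * (erlang_density 0 2 x * x ^ 0)) =
        ennreal (1 / 2) * ennreal (erlang_density 0 2 x * x ^ 0)"
      by (rule ennreal_mult') simp
    finally show ?thesis .
  qed
  then have "(\<integral>\<^sup>+\<omega>. ennreal (exp (- X i \<omega>)) \<partial>M) =
      ennreal (1 / 2) * (\<integral>\<^sup>+x. ennreal (erlang_density 0 2 x * x ^ 0) \<partial>lborel)"
    using nn_integral_X[OF \<open>i \<ge> 1\<close>, of "\<lambda>x. ennreal (exp (- x))"]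
    by (simp add: nn_integral_cmult del: power_0)
  also have "\<dots> = ennreal (1 / 2)"
    by (subst nn_integral_erlang_ith_moment) auto
  finally show ?thesis .
qed

lemma distributed_block_sum:
  assumes "n \<ge> 1"
  shows "distributed M lborel (block_sum r n) (erlang_density (n - 1) 1)"
proof -
  have "distributed M lborel (\<lambda>\<omega>. \<Sum>i\<in>{Suc r..r + n}. X i \<omega>)
      (erlang_density (card {Suc r..r + n} - 1) 1)"
    using assms by (intro exponential_distributed_sum distributed_X indep_vars_subset[OF indep_X]) auto
  then show ?thesis
    by (simp add: block_sum_def[abs_def])
qed

lemma suminf_erlang_density: "(\<Sum>n. ennreal (erlang_density n 1 x)) = indicator {0..} x"
proof (cases "x < 0")
  case False
  have "(\<lambda>n. exp (- x) * (x ^ n /\<^sub>R fact n)) sums (exp (- x) * exp x)"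
    by (intro sums_mult exp_converges)
  then have "(\<lambda>n. erlang_density n 1 x) sums 1"
    using False by (simp add: erlang_density_def exp_minus field_simps)
  then show ?thesis
    using False by (subst suminf_ennreal_eq) auto
qed (simp add: erlang_density_def)

text \<open>Renewal identity: the Erlang densities of all block sums add up to the indicator
  of \<open>[0, \<infinity>)\<close>, so the expected number of block sums in \<open>J\<close> is the length of \<open>J \<inter> [0, \<infinity>)\<close>.\<close>
lemma suminf_prob_block_sum:
  assumes "J \<in> sets borel"
  shows "(\<Sum>n. \<integral>\<^sup>+\<omega>. indicator J (block_sum r (Suc n) \<omega>) \<partial>M) = emeasure lborel (J \<inter> {0..})"
proof -
  have "(\<integral>\<^sup>+\<omega>. indicator J (block_sum r (Suc n) \<omega>) \<partial>M)
      = (\<integral>\<^sup>+x. ennreal (erlang_density n 1 x) * indicator J x \<partial>lborel)" for n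
    using distributed_nn_integral[OF distributed_block_sum[of "Suc n" r], of "indicator J"] assms
    by simp
  then have "(\<Sum>n. \<integral>\<^sup>+\<omega>. indicator J (block_sum r (Suc n) \<omega>) \<partial>M)
      = (\<Sum>n. \<integral>\<^sup>+x. ennreal (erlang_density n 1 x) * indicator J x \<partial>lborel)"
    by simp
  also have "\<dots> = (\<integral>\<^sup>+x. (\<Sum>n. ennreal (erlang_density n 1 x)) * indicator J x \<partial>lborel)"
    using assms by (subst nn_integral_suminf[symmetric]) auto
  also have "\<dots> = emeasure lborel (J \<inter> {0..})"
    using assms by (simp add: suminf_erlang_density indicator_inter_arith[symmetric] Int_commute)
  finally show ?thesis .
qed

lemma suminf_prob_block_sum_interval_le:
  assumes "a \<le> b"
  shows "(\<Sum>n. \<integral>\<^sup>+\<omega>. indicator {a<..b} (block_sum r (Suc n) \<omega>) \<partial>M) \<le> ennreal (b - a)"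
proof -
  have "(\<Sum>n. \<integral>\<^sup>+\<omega>. indicator {a<..b} (block_sum r (Suc n) \<omega>) \<partial>M) = emeasure lborel ({a<..b} \<inter> {0..})"
    by (rule suminf_prob_block_sum) simp
  also have "\<dots> \<le> emeasure lborel {a<..b}"
    by (intro emeasure_mono) auto
  finally show ?thesis
    using assms by simp
qed

lemma suminf_prob_block_sum_atMost:
  assumes "0 \<le> L"
  shows "(\<Sum>n. \<integral>\<^sup>+\<omega>. indicator {..L} (block_sum r (Suc n) \<omega>) \<partial>M) = ennreal L"
proof -
  have "{..L} \<inter> {0..} = {0..L}"
    by auto
  then show ?thesis
    using assms by (simp add: suminf_prob_block_sum)
qed

lemma suminf_prob_block_sum_atMost_from_0:
  assumes "0 \<le> L"
  shows "(\<Sum>n. \<integral>\<^sup>+\<omega>. indicator {..L} (block_sum r n \<omega>) \<partial>M) = 1 + ennreal L"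
  using suminf_offset[OF summableI, of "\<lambda>n. \<integral>\<^sup>+\<omega>. indicator {..L} (block_sum r n \<omega>) \<partial>M" 1]
    suminf_prob_block_sum_atMost[OF assms, of r] assms
  by (simp add: block_sum_def emeasure_space_1 add.commute)

lemma indep_var_consecutive_blocks:
  assumes "r + k \<ge> 1"
  shows "indep_var borel (\<lambda>\<omega>. (block_sum r k \<omega>, X (r + k) \<omega>))
    borel (\<lambda>\<omega>. (block_sum (r + k) n \<omega>, X (Suc (r + k + n)) \<omega>))"
proof -
  define A where "A = insert (r + k) {Suc r..r + k}"
  define C where "C = {Suc (r + k)..Suc (r + k + n)}"
  define f where "f y = (\<Sum>i=Suc r..r + k. y i, y (r + k) :: real)" for y
  define g where "g y = (\<Sum>i=Suc (r + k)..r + k + n. y i, y (Suc (r + k + n)) :: real)" for y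
  have "indep_var (PiM A (\<lambda>_. borel)) (\<lambda>\<omega>. restrict (\<lambda>i. X i \<omega>) A)
      (PiM C (\<lambda>_. borel)) (\<lambda>\<omega>. restrict (\<lambda>i. X i \<omega>) C)"
    using assms by (intro indep_var_restrict[OF indep_X]) (auto simp: A_def C_def)
  then have "indep_var borel (f \<circ> (\<lambda>\<omega>. restrict (\<lambda>i. X i \<omega>) A)) borel (g \<circ> (\<lambda>\<omega>. restrict (\<lambda>i. X i \<omega>) C))"
    by (rule indep_var_compose) (unfold f_def g_def A_def C_def, measurable)
  moreover have "f \<circ> (\<lambda>\<omega>. restrict (\<lambda>i. X i \<omega>) A) = (\<lambda>\<omega>. (block_sum r k \<omega>, X (r + k) \<omega>))"
    by (auto simp: fun_eq_iff f_def A_def block_sum_def intro!: sum.cong)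
  moreover have "g \<circ> (\<lambda>\<omega>. restrict (\<lambda>i. X i \<omega>) C) =
      (\<lambda>\<omega>. (block_sum (r + k) n \<omega>, X (Suc (r + k + n)) \<omega>))"
    by (auto simp: fun_eq_iff g_def C_def block_sum_def intro!: sum.cong)
  ultimately show ?thesis
    by simp
qed

lemma nn_integral_consecutive_blocks_mult:
  assumes "r + k \<ge> 1" and "f \<in> borel_measurable borel" and "g \<in> borel_measurable borel"
  shows "(\<integral>\<^sup>+\<omega>. f (block_sum r k \<omega>, X (r + k) \<omega>) * g (block_sum (r + k) n \<omega>, X (Suc (r + k + n)) \<omega>) \<partial>M)
    = (\<integral>\<^sup>+\<omega>. f (block_sum r k \<omega>, X (r + k) \<omega>) \<partial>M) *
      (\<integral>\<^sup>+\<omega>. g (block_sum (r + k) n \<omega>, X (Suc (r + k + n)) \<omega>) \<partial>M)"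
  by (rule nn_integral_indep_var_mult[OF indep_var_consecutive_blocks[OF assms(1)] assms(2,3)])

lemma indep_var_partial_sum_X: "indep_var borel (partial_sum (Suc n)) borel (X (Suc (Suc n)))"
proof -
  have "indep_var borel (fst \<circ> (\<lambda>\<omega>. (block_sum 0 (Suc n) \<omega>, X (0 + Suc n) \<omega>)))
      borel (snd \<circ> (\<lambda>\<omega>. (block_sum (0 + Suc n) 0 \<omega>, X (Suc (0 + Suc n + 0)) \<omega>)))"
    by (intro indep_var_compose[OF indep_var_consecutive_blocks] borel_measurable_continuous_onI
        continuous_intros) auto
  then show ?thesis
    by (simp add: comp_def partial_sum_eq_block_sum)
qed

subsection \<open>Increments of the counting function\<close>

lemma nn_integral_hit_square_1:
  assumes "a \<le> b"
  shows "(\<integral>\<^sup>+\<omega>. ennreal (indicator {a<..b} (partial_sum 1 \<omega>) * (X 1 \<omega>)\<^sup>2) \<partial>M) \<le> 2 * ennreal (b - a)"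
proof -
  have "(\<integral>\<^sup>+\<omega>. ennreal (indicator {a<..b} (partial_sum 1 \<omega>) * (X 1 \<omega>)\<^sup>2) \<partial>M)
      = (\<integral>\<^sup>+x. ennreal (exponential_density 1 x) * ennreal (indicator {a<..b} x * x\<^sup>2) \<partial>lborel)"
    using nn_integral_X[of 1 "\<lambda>x. ennreal (indicator {a<..b} x * x\<^sup>2)"] by (simp add: partial_sum_def)
  also have "\<dots> \<le> (\<integral>\<^sup>+x. 2 * indicator {a<..b} x \<partial>lborel)"
  proof (intro nn_integral_mono)
    fix x :: real
    have "exponential_density 1 x * (indicator {a<..b} x * x\<^sup>2) \<le> 2 * indicator {a<..b} x"
      using exponential_density_mult_square_le[of x] by (auto split: split_indicator)
    from ennreal_leI[OF this]
    show "ennreal (exponential_density 1 x) * ennreal (indicator {a<..b} x * x\<^sup>2) \<le> 2 * indicator {a<..b} x"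
      by (simp add: ennreal_mult ennreal_indicator)
  qed
  also have "\<dots> = 2 * ennreal (b - a)"
    using assms by (simp add: nn_integral_cmult_indicator)
  finally show ?thesis .
qed

lemma nn_integral_hit_square_Suc:
  "(\<integral>\<^sup>+\<omega>. ennreal (indicator {a<..b} (partial_sum (Suc (Suc n)) \<omega>) * (X (Suc (Suc n)) \<omega>)\<^sup>2) \<partial>M)
    = (\<integral>\<^sup>+x. ennreal (exponential_density 1 x) *
        (ennreal (x\<^sup>2) * \<integral>\<^sup>+\<omega>. indicator {a<..b} (partial_sum (Suc n) \<omega> + x) \<partial>M) \<partial>lborel)"
proof -
  have "(\<integral>\<^sup>+\<omega>. ennreal (indicator {a<..b} (partial_sum (Suc (Suc n)) \<omega>) * (X (Suc (Suc n)) \<omega>)\<^sup>2) \<partial>M)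
      = (\<integral>\<^sup>+\<omega>. ennreal (indicator {a<..b} (partial_sum (Suc n) \<omega> + X (Suc (Suc n)) \<omega>) *
          (X (Suc (Suc n)) \<omega>)\<^sup>2) \<partial>M)"
    by (simp add: partial_sum_def)
  also have "\<dots> = (\<integral>\<^sup>+\<omega>'. \<integral>\<^sup>+\<omega>. ennreal (indicator {a<..b} (partial_sum (Suc n) \<omega> + X (Suc (Suc n)) \<omega>') *
          (X (Suc (Suc n)) \<omega>')\<^sup>2) \<partial>M \<partial>M)"
    by (rule nn_integral_indep_var[OF indep_var_partial_sum_X]) measurable
  also have "\<dots> = (\<integral>\<^sup>+\<omega>'. ennreal ((X (Suc (Suc n)) \<omega>')\<^sup>2) *
      \<integral>\<^sup>+\<omega>. indicator {a<..b} (partial_sum (Suc n) \<omega> + X (Suc (Suc n)) \<omega>') \<partial>M \<partial>M)"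
    by (subst nn_integral_cmult[symmetric])
       (auto intro!: nn_integral_cong simp: ennreal_mult' ennreal_indicator mult.commute)
  also have "\<dots> = (\<integral>\<^sup>+x. ennreal (exponential_density 1 x) *
        (ennreal (x\<^sup>2) * \<integral>\<^sup>+\<omega>. indicator {a<..b} (partial_sum (Suc n) \<omega> + x) \<partial>M) \<partial>lborel)"
    by (rule nn_integral_X) measurable
  finally show ?thesis .
qed

text \<open>Conditionally on \<open>X\<^sub>k\<^sub>+\<^sub>1 = x\<close>, the term \<open>k \<ge> 1\<close> asks for \<open>S\<^sub>k \<in> (a - x, b - x]\<close>; by the
  renewal identity the expected number of such \<open>k\<close> is at most \<open>b - a\<close>, uniformly in \<open>x\<close>.\<close>
lemma suminf_nn_integral_hit_square_le:
  assumes "a \<le> b"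
  shows "(\<Sum>k. \<integral>\<^sup>+\<omega>. ennreal (indicator {a<..b} (partial_sum (Suc k) \<omega>) * (X (Suc k) \<omega>)\<^sup>2) \<partial>M)
    \<le> 4 * ennreal (b - a)"
proof -
  define U where "U k = (\<integral>\<^sup>+\<omega>. ennreal (indicator {a<..b} (partial_sum (Suc k) \<omega>) * (X (Suc k) \<omega>)\<^sup>2) \<partial>M)" for k
  define P where "P n x = (\<integral>\<^sup>+\<omega>. indicator {a<..b} (partial_sum (Suc n) \<omega> + x) \<partial>M)" for n x
  have renewal: "(\<Sum>n. P n x) \<le> ennreal (b - a)" for x
  proof -
    have "(\<Sum>n. P n x) = (\<Sum>n. \<integral>\<^sup>+\<omega>. indicator {a - x<..b - x} (block_sum 0 (Suc n) \<omega>) \<partial>M)"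
      unfolding P_def partial_sum_eq_block_sum
      by (intro suminf_cong nn_integral_cong) (auto split: split_indicator)
    also have "\<dots> \<le> ennreal (b - a)"
      using suminf_prob_block_sum_interval_le[of "a - x" "b - x" 0] assms by simp
    finally show ?thesis .
  qed
  have "(\<Sum>n. U (Suc n)) = (\<integral>\<^sup>+x. (\<Sum>n. ennreal (exponential_density 1 x) * (ennreal (x\<^sup>2) * P n x)) \<partial>lborel)"
    unfolding U_def P_def nn_integral_hit_square_Suc
    by (rule nn_integral_suminf[symmetric]) measurable
  also have "\<dots> = (\<integral>\<^sup>+x. ennreal (exponential_density 1 x) * (ennreal (x\<^sup>2) * (\<Sum>n. P n x)) \<partial>lborel)"
    by (simp only: ennreal_suminf_cmult)
  also have "\<dots> \<le> (\<integral>\<^sup>+x. ennreal (exponential_density 1 x) * ennreal (x\<^sup>2) * ennreal (b - a) \<partial>lborel)"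
    using renewal by (auto intro!: nn_integral_mono mult_left_mono simp: mult.assoc)
  also have "\<dots> = 2 * ennreal (b - a)"
    using nn_integral_X_square[of 1] nn_integral_X[of 1 "\<lambda>x. ennreal (x\<^sup>2)"]
    by (simp add: nn_integral_multc)
  finally have "(\<Sum>n. U (Suc n)) \<le> 2 * ennreal (b - a)" .
  moreover have "(\<Sum>k. U k) = U 0 + (\<Sum>n. U (Suc n))"
    using suminf_offset[OF summableI, of U 1] by (simp add: add.commute)
  moreover have "U 0 \<le> 2 * ennreal (b - a)"
    using nn_integral_hit_square_1[OF assms] by (simp add: U_def)
  ultimately have "(\<Sum>k. U k) \<le> 2 * ennreal (b - a) + 2 * ennreal (b - a)"
    by (simp add: add_mono)
  then show ?thesis
    unfolding U_def by (simp add: distrib_right[symmetric])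
qed

lemma nn_integral_hit_pair_upper_le:
  assumes "a \<le> b"
  shows "(\<integral>\<^sup>+\<omega>. ennreal (indicator {a<..b} (partial_sum (Suc k) \<omega>) *
      indicator {a<..b} (partial_sum (Suc (n + Suc k)) \<omega>) * (X (Suc k) \<omega>)\<^sup>2) \<partial>M)
    \<le> (\<integral>\<^sup>+\<omega>. ennreal (indicator {a<..b} (partial_sum (Suc k) \<omega>) * (X (Suc k) \<omega>)\<^sup>2) \<partial>M) *
      (\<integral>\<^sup>+\<omega>. indicator {..b - a} (block_sum (Suc k) (Suc n) \<omega>) \<partial>M)"
proof -
  define f :: "real \<times> real \<Rightarrow> ennreal" where "f p = ennreal (indicator {a<..b} (fst p) * (snd p)\<^sup>2)" for p
  define g :: "real \<times> real \<Rightarrow> ennreal" where "g q = indicator {..b - a} (fst q)" for q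
  have "(\<integral>\<^sup>+\<omega>. ennreal (indicator {a<..b} (partial_sum (Suc k) \<omega>) *
      indicator {a<..b} (partial_sum (Suc (n + Suc k)) \<omega>) * (X (Suc k) \<omega>)\<^sup>2) \<partial>M)
    \<le> (\<integral>\<^sup>+\<omega>. f (block_sum 0 (Suc k) \<omega>, X (0 + Suc k) \<omega>) *
        g (block_sum (0 + Suc k) (Suc n) \<omega>, X (Suc (0 + Suc k + Suc n)) \<omega>) \<partial>M)"
  proof (intro nn_integral_mono)
    fix \<omega>
    have "partial_sum (Suc (n + Suc k)) \<omega> = partial_sum (Suc k) \<omega> + block_sum (Suc k) (Suc n) \<omega>"
      using partial_sum_add[of "Suc k" "Suc n" \<omega>] by (simp add: add.commute)
    then show "ennreal (indicator {a<..b} (partial_sum (Suc k) \<omega>) *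
        indicator {a<..b} (partial_sum (Suc (n + Suc k)) \<omega>) * (X (Suc k) \<omega>)\<^sup>2)
      \<le> f (block_sum 0 (Suc k) \<omega>, X (0 + Suc k) \<omega>) *
        g (block_sum (0 + Suc k) (Suc n) \<omega>, X (Suc (0 + Suc k + Suc n)) \<omega>)"
      by (auto simp: f_def g_def partial_sum_eq_block_sum split: split_indicator)
  qed
  also have "\<dots> = (\<integral>\<^sup>+\<omega>. f (block_sum 0 (Suc k) \<omega>, X (0 + Suc k) \<omega>) \<partial>M) *
      (\<integral>\<^sup>+\<omega>. g (block_sum (0 + Suc k) (Suc n) \<omega>, X (Suc (0 + Suc k + Suc n)) \<omega>) \<partial>M)"
    by (rule nn_integral_consecutive_blocks_mult) (unfold f_def g_def borel_prod[symmetric], measurable)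
  finally show ?thesis
    by (simp add: f_def g_def partial_sum_eq_block_sum)
qed

lemma nn_integral_hit_pair_lower_le:
  assumes "a \<le> b"
  shows "(\<integral>\<^sup>+\<omega>. ennreal (indicator {a<..b} (partial_sum (Suc (n + Suc j)) \<omega>) *
      indicator {a<..b} (partial_sum (Suc j) \<omega>) * (X (Suc (n + Suc j)) \<omega>)\<^sup>2) \<partial>M)
    \<le> (\<integral>\<^sup>+\<omega>. indicator {a<..b} (partial_sum (Suc j) \<omega>) \<partial>M) *
      ((\<integral>\<^sup>+\<omega>. indicator {..b - a} (block_sum (Suc j) n \<omega>) \<partial>M) * 2)"
proof -
  define f :: "real \<times> real \<Rightarrow> ennreal" where "f p = indicator {a<..b} (fst p)" for p
  define g :: "real \<times> real \<Rightarrow> ennreal" where "g q = ennreal (indicator {..b - a} (fst q) * (snd q)\<^sup>2)" for q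
  have "(\<integral>\<^sup>+\<omega>. ennreal (indicator {a<..b} (partial_sum (Suc (n + Suc j)) \<omega>) *
      indicator {a<..b} (partial_sum (Suc j) \<omega>) * (X (Suc (n + Suc j)) \<omega>)\<^sup>2) \<partial>M)
    \<le> (\<integral>\<^sup>+\<omega>. f (block_sum 0 (Suc j) \<omega>, X (0 + Suc j) \<omega>) *
        g (block_sum (0 + Suc j) n \<omega>, X (Suc (0 + Suc j + n)) \<omega>) \<partial>M)"
  proof (intro nn_integral_mono_AE, use AE_X_nonneg in eventually_elim)
    case (elim \<omega>)
    have "partial_sum (Suc (n + Suc j)) \<omega> =
        partial_sum (Suc j) \<omega> + block_sum (Suc j) n \<omega> + X (Suc (Suc j + n)) \<omega>"
      using partial_sum_add[of "Suc j" "Suc n" \<omega>] by (simp add: block_sum_Suc add.commute add.assoc)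
    moreover have "0 \<le> X (Suc (Suc j + n)) \<omega>"
      using elim by simp
    ultimately show ?case
      by (auto simp: f_def g_def partial_sum_eq_block_sum add.commute split: split_indicator)
  qed
  also have "\<dots> = (\<integral>\<^sup>+\<omega>. f (block_sum 0 (Suc j) \<omega>, X (0 + Suc j) \<omega>) \<partial>M) *
      (\<integral>\<^sup>+\<omega>. g (block_sum (0 + Suc j) n \<omega>, X (Suc (0 + Suc j + n)) \<omega>) \<partial>M)"
    by (rule nn_integral_consecutive_blocks_mult) (unfold f_def g_def borel_prod[symmetric], measurable)
  also have "(\<integral>\<^sup>+\<omega>. g (block_sum (0 + Suc j) n \<omega>, X (Suc (0 + Suc j + n)) \<omega>) \<partial>M) =
      (\<integral>\<^sup>+\<omega>. indicator {..b - a} (block_sum (Suc j) n \<omega>) * ennreal ((X (Suc (Suc j + n + 0)) \<omega>)\<^sup>2) \<partial>M)"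
    by (intro nn_integral_cong) (simp add: g_def ennreal_mult'' ennreal_indicator)
  also have "\<dots> = (\<integral>\<^sup>+\<omega>. indicator {..b - a} (block_sum (Suc j) n \<omega>) \<partial>M) * 2"
    using nn_integral_consecutive_blocks_mult[where r="Suc j" and k=n and n=0
        and f="\<lambda>p. indicator {..b - a} (fst p)" and g="\<lambda>q. ennreal ((snd q)\<^sup>2)"]
    by (simp add: nn_integral_X_square borel_prod[symmetric])
  finally show ?thesis
    by (simp add: f_def partial_sum_eq_block_sum)
qed

lemma suminf_nn_integral_hit_pairs_above_le:
  assumes "a \<le> b"
  shows "(\<Sum>k. \<Sum>n. \<integral>\<^sup>+\<omega>. ennreal (indicator {a<..b} (partial_sum (Suc k) \<omega>) *
      indicator {a<..b} (partial_sum (Suc (n + Suc k)) \<omega>) * (X (Suc k) \<omega>)\<^sup>2) \<partial>M)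
    \<le> (\<Sum>k. \<integral>\<^sup>+\<omega>. ennreal (indicator {a<..b} (partial_sum (Suc k) \<omega>) * (X (Suc k) \<omega>)\<^sup>2) \<partial>M) *
      ennreal (b - a)"
proof -
  have "(\<Sum>k. \<Sum>n. \<integral>\<^sup>+\<omega>. ennreal (indicator {a<..b} (partial_sum (Suc k) \<omega>) *
      indicator {a<..b} (partial_sum (Suc (n + Suc k)) \<omega>) * (X (Suc k) \<omega>)\<^sup>2) \<partial>M)
    \<le> (\<Sum>k. \<Sum>n. (\<integral>\<^sup>+\<omega>. ennreal (indicator {a<..b} (partial_sum (Suc k) \<omega>) * (X (Suc k) \<omega>)\<^sup>2) \<partial>M) *
      \<integral>\<^sup>+\<omega>. indicator {..b - a} (block_sum (Suc k) (Suc n) \<omega>) \<partial>M)"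
    using assms by (intro suminf_le summableI nn_integral_hit_pair_upper_le)
  also have "\<dots> = (\<Sum>k. (\<integral>\<^sup>+\<omega>. ennreal (indicator {a<..b} (partial_sum (Suc k) \<omega>) * (X (Suc k) \<omega>)\<^sup>2) \<partial>M) *
      ennreal (b - a))"
    using assms by (simp add: suminf_prob_block_sum_atMost)
  finally show ?thesis
    by simp
qed

lemma suminf_nn_integral_hit_pairs_below_le:
  assumes "a \<le> b"
  shows "(\<Sum>j. \<Sum>n. \<integral>\<^sup>+\<omega>. ennreal (indicator {a<..b} (partial_sum (Suc (n + Suc j)) \<omega>) *
      indicator {a<..b} (partial_sum (Suc j) \<omega>) * (X (Suc (n + Suc j)) \<omega>)\<^sup>2) \<partial>M)
    \<le> ennreal (b - a) * ((1 + ennreal (b - a)) * 2)"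
proof -
  define P where "P j = (\<integral>\<^sup>+\<omega>. indicator {a<..b} (partial_sum (Suc j) \<omega>) \<partial>M)" for j
  have "(\<Sum>j. \<Sum>n. \<integral>\<^sup>+\<omega>. ennreal (indicator {a<..b} (partial_sum (Suc (n + Suc j)) \<omega>) *
      indicator {a<..b} (partial_sum (Suc j) \<omega>) * (X (Suc (n + Suc j)) \<omega>)\<^sup>2) \<partial>M)
    \<le> (\<Sum>j. \<Sum>n. P j * ((\<integral>\<^sup>+\<omega>. indicator {..b - a} (block_sum (Suc j) n \<omega>) \<partial>M) * 2))"
    unfolding P_def using assms by (intro suminf_le summableI nn_integral_hit_pair_lower_le)
  also have "\<dots> = (\<Sum>j. P j) * ((1 + ennreal (b - a)) * 2)"
    using assms by (simp add: suminf_prob_block_sum_atMost_from_0)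
  also have "(\<Sum>j. P j) \<le> ennreal (b - a)"
    unfolding P_def partial_sum_eq_block_sum by (rule suminf_prob_block_sum_interval_le[OF assms])
  finally show ?thesis
    by (simp add: mult_right_mono)
qed

lemma suminf_nn_integral_hit_pairs_le:
  assumes "a \<le> b"
  shows "(\<Sum>k. \<Sum>j. \<integral>\<^sup>+\<omega>. ennreal (indicator {a<..b} (partial_sum (Suc k) \<omega>) *
      indicator {a<..b} (partial_sum (Suc j) \<omega>) * (X (Suc k) \<omega>)\<^sup>2) \<partial>M)
    \<le> ennreal (6 * (b - a) + 6 * (b - a)\<^sup>2)"
proof -
  define L where "L = b - a"
  have L: "0 \<le> L"
    using assms by (simp add: L_def)
  define U where "U k = (\<integral>\<^sup>+\<omega>. ennreal (indicator {a<..b} (partial_sum (Suc k) \<omega>) * (X (Suc k) \<omega>)\<^sup>2) \<partial>M)" for k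
  have U: "(\<Sum>k. U k) \<le> 4 * ennreal L"
    unfolding U_def L_def by (rule suminf_nn_integral_hit_square_le[OF assms])
  have diagonal: "(\<Sum>k. \<integral>\<^sup>+\<omega>. ennreal (indicator {a<..b} (partial_sum (Suc k) \<omega>) *
      indicator {a<..b} (partial_sum (Suc k) \<omega>) * (X (Suc k) \<omega>)\<^sup>2) \<partial>M) = (\<Sum>k. U k)"
    unfolding U_def by (intro suminf_cong nn_integral_cong) (simp split: split_indicator)
  have "(\<Sum>k. \<Sum>j. \<integral>\<^sup>+\<omega>. ennreal (indicator {a<..b} (partial_sum (Suc k) \<omega>) *
      indicator {a<..b} (partial_sum (Suc j) \<omega>) * (X (Suc k) \<omega>)\<^sup>2) \<partial>M)
    = (\<Sum>k. U k) +
      (\<Sum>k. \<Sum>n. \<integral>\<^sup>+\<omega>. ennreal (indicator {a<..b} (partial_sum (Suc k) \<omega>) *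
        indicator {a<..b} (partial_sum (Suc (n + Suc k)) \<omega>) * (X (Suc k) \<omega>)\<^sup>2) \<partial>M) +
      (\<Sum>j. \<Sum>n. \<integral>\<^sup>+\<omega>. ennreal (indicator {a<..b} (partial_sum (Suc (n + Suc j)) \<omega>) *
        indicator {a<..b} (partial_sum (Suc j) \<omega>) * (X (Suc (n + Suc j)) \<omega>)\<^sup>2) \<partial>M)"
    unfolding diagonal[symmetric] by (rule suminf_ennreal_split_diagonal)
  also have "\<dots> \<le> 4 * ennreal L + 4 * ennreal L * ennreal L + ennreal L * ((1 + ennreal L) * 2)"
    using U order.trans[OF suminf_nn_integral_hit_pairs_above_le[OF assms, folded U_def L_def]
        mult_right_mono[OF U]]
      suminf_nn_integral_hit_pairs_below_le[OF assms, folded L_def]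
    by (intro add_mono) auto
  also have "\<dots> = ennreal (4 * L + 4 * L * L + L * ((1 + L) * 2))"
    using L by (simp add: ennreal_mult)
  also have "4 * L + 4 * L * L + L * ((1 + L) * 2) = 6 * L + 6 * L\<^sup>2"
    by (simp add: algebra_simps power2_eq_square)
  finally show ?thesis
    by (simp add: L_def)
qed

lemma nn_integral_kappa_increment_le:
  assumes "0 < \<mu>" and "0 \<le> s" and "s \<le> t"
  shows "ennreal (1 / (real \<mu>)\<^sup>2) *
      (\<integral>\<^sup>+ \<omega>. ennreal (\<bar>real (kappa X \<mu> t \<omega>) - real (kappa X \<mu> s \<omega>)\<bar> *
        (\<Sum>k\<in>{kappa X \<mu> s \<omega>..<kappa X \<mu> t \<omega>}. (X (k + 1) \<omega>)\<^sup>2)) \<partial>M)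
    \<le> ennreal (12 * (sqrt \<bar>t - s\<bar> + \<bar>t - s\<bar>\<^sup>2))"
proof -
  define a b where "a = real \<mu> * s" and "b = real \<mu> * t"
  have "a \<le> b"
    using assms by (simp add: a_def b_def mult_left_mono)
  have "(\<integral>\<^sup>+ \<omega>. ennreal (\<bar>real (kappa X \<mu> t \<omega>) - real (kappa X \<mu> s \<omega>)\<bar> *
        (\<Sum>k\<in>{kappa X \<mu> s \<omega>..<kappa X \<mu> t \<omega>}. (X (k + 1) \<omega>)\<^sup>2)) \<partial>M)
    \<le> (\<integral>\<^sup>+\<omega>. (\<Sum>k. \<Sum>j. ennreal (indicator {a<..b} (partial_sum (Suc k) \<omega>) *
        indicator {a<..b} (partial_sum (Suc j) \<omega>) * (X (Suc k) \<omega>)\<^sup>2)) \<partial>M)"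
  proof (intro nn_integral_mono_AE, use AE_X_nonneg in eventually_elim)
    case (elim \<omega>)
    from kappa_increment_le_double_sum[where X=X and \<omega>=\<omega>, OF elim assms]
    show ?case
      by (simp only: partial_sum_def a_def b_def)
  qed
  also have "\<dots> = (\<Sum>k. \<Sum>j. \<integral>\<^sup>+\<omega>. ennreal (indicator {a<..b} (partial_sum (Suc k) \<omega>) *
        indicator {a<..b} (partial_sum (Suc j) \<omega>) * (X (Suc k) \<omega>)\<^sup>2) \<partial>M)"
    by (simp add: nn_integral_suminf)
  also have "\<dots> \<le> ennreal (6 * (b - a) + 6 * (b - a)\<^sup>2)"
    by (rule suminf_nn_integral_hit_pairs_le[OF \<open>a \<le> b\<close>])
  finally have bound: "(\<integral>\<^sup>+ \<omega>. ennreal (\<bar>real (kappa X \<mu> t \<omega>) - real (kappa X \<mu> s \<omega>)\<bar> *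
        (\<Sum>k\<in>{kappa X \<mu> s \<omega>..<kappa X \<mu> t \<omega>}. (X (k + 1) \<omega>)\<^sup>2)) \<partial>M)
    \<le> ennreal (6 * (b - a) + 6 * (b - a)\<^sup>2)" .
  have "b - a = real \<mu> * (t - s)"
    by (simp add: a_def b_def algebra_simps)
  then have scaled: "(6 * (b - a) + 6 * (b - a)\<^sup>2) / (real \<mu>)\<^sup>2 \<le> 12 * (sqrt \<bar>t - s\<bar> + \<bar>t - s\<bar>\<^sup>2)"
    using rescaled_increment_bound_le[of "t - s" "real \<mu>"] assms by simp
  have "ennreal (1 / (real \<mu>)\<^sup>2) *
      (\<integral>\<^sup>+ \<omega>. ennreal (\<bar>real (kappa X \<mu> t \<omega>) - real (kappa X \<mu> s \<omega>)\<bar> *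
        (\<Sum>k\<in>{kappa X \<mu> s \<omega>..<kappa X \<mu> t \<omega>}. (X (k + 1) \<omega>)\<^sup>2)) \<partial>M)
    \<le> ennreal (1 / (real \<mu>)\<^sup>2) * ennreal (6 * (b - a) + 6 * (b - a)\<^sup>2)"
    by (rule mult_left_mono[OF bound]) simp
  also have "\<dots> = ennreal (1 / (real \<mu>)\<^sup>2 * (6 * (b - a) + 6 * (b - a)\<^sup>2))"
    by (rule ennreal_mult'[symmetric]) simp
  also have "\<dots> \<le> ennreal (12 * (sqrt \<bar>t - s\<bar> + \<bar>t - s\<bar>\<^sup>2))"
    using scaled by (intro ennreal_leI) simp
  finally show ?thesis .
qed

subsection \<open>Tail of the counting function\<close>

lemma prob_partial_sum_le_exp:
  "(\<integral>\<^sup>+\<omega>. indicator {..c} (partial_sum n \<omega>) \<partial>M) \<le> ennreal (exp c * (1 / 2) ^ n)"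
proof -
  have "(\<integral>\<^sup>+\<omega>. indicator {..c} (partial_sum n \<omega>) \<partial>M)
      \<le> (\<integral>\<^sup>+\<omega>. ennreal (exp c) * (\<Prod>i=1..n. ennreal (exp (- X i \<omega>))) \<partial>M)"
  proof (intro nn_integral_mono)
    fix \<omega>
    have "indicator {..c} (partial_sum n \<omega>) \<le> exp c * exp (- partial_sum n \<omega>)"
      by (auto split: split_indicator simp: exp_add[symmetric])
    also have "exp (- partial_sum n \<omega>) = (\<Prod>i=1..n. exp (- X i \<omega>))"
      by (simp add: partial_sum_def exp_sum[symmetric] sum_negf)
    finally have "indicator {..c} (partial_sum n \<omega>) \<le> exp c * (\<Prod>i=1..n. exp (- X i \<omega>))" .
    from ennreal_leI[OF this]
    show "indicator {..c} (partial_sum n \<omega>) \<le> ennreal (exp c) * (\<Prod>i=1..n. ennreal (exp (- X i \<omega>)))"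
      by (simp add: ennreal_indicator prod_ennreal ennreal_mult prod_nonneg)
  qed
  also have "\<dots> = ennreal (exp c) * (\<Prod>i=1..n. \<integral>\<^sup>+\<omega>. ennreal (exp (- X i \<omega>)) \<partial>M)"
  proof -
    have "indep_vars (\<lambda>_. borel) (\<lambda>i \<omega>. ennreal (exp (- X i \<omega>))) {1..n}"
      by (rule indep_vars_compose2[OF indep_vars_subset[OF indep_X]]) auto
    from indep_vars_nn_integral[OF _ this] show ?thesis
      by (simp add: nn_integral_cmult)
  qed
  also have "(\<Prod>i=1..n. \<integral>\<^sup>+\<omega>. ennreal (exp (- X i \<omega>)) \<partial>M) = ennreal (1 / 2) ^ n"
    by (simp add: nn_integral_exp_neg_X)
  also have "ennreal (1 / 2) ^ n = ennreal ((1 / 2) ^ n)"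
    by (rule ennreal_power) simp
  also have "ennreal (exp c) * ennreal ((1 / 2) ^ n) = ennreal (exp c * (1 / 2) ^ n)"
    by (rule ennreal_mult'[symmetric]) simp
  finally show ?thesis .
qed

lemma nn_integral_kappa_square_tail_le:
  assumes "0 < \<mu>" and "0 \<le> t"
  shows "(\<integral>\<^sup>+\<omega>. ennreal (indicator {\<omega>'. real (kappa X \<mu> t \<omega>') \<ge> 6 * real \<mu> * t} \<omega> *
      (real (kappa X \<mu> t \<omega>))\<^sup>2) \<partial>M)
    \<le> (\<Sum>j. \<Sum>k. \<integral>\<^sup>+\<omega>. indicator {..real \<mu> * t}
      (partial_sum (max (max (Suc j) (Suc k)) (nat \<lceil>6 * real \<mu> * t\<rceil>)) \<omega>) \<partial>M)"
proof -
  have "(\<integral>\<^sup>+\<omega>. ennreal (indicator {\<omega>'. real (kappa X \<mu> t \<omega>') \<ge> 6 * real \<mu> * t} \<omega> *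
      (real (kappa X \<mu> t \<omega>))\<^sup>2) \<partial>M)
    \<le> (\<integral>\<^sup>+\<omega>. (\<Sum>j. \<Sum>k. indicator {..real \<mu> * t}
      (partial_sum (max (max (Suc j) (Suc k)) (nat \<lceil>6 * real \<mu> * t\<rceil>)) \<omega>)) \<partial>M)"
  proof (intro nn_integral_mono_AE, use AE_X_nonneg in eventually_elim)
    case (elim \<omega>)
    from kappa_square_le_double_sum[where X=X and \<omega>=\<omega>, OF elim assms]
    show ?case
      by (simp only: partial_sum_def ennreal_indicator)
  qed
  also have "\<dots> = (\<Sum>j. \<Sum>k. \<integral>\<^sup>+\<omega>. indicator {..real \<mu> * t}
      (partial_sum (max (max (Suc j) (Suc k)) (nat \<lceil>6 * real \<mu> * t\<rceil>)) \<omega>) \<partial>M)"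
    by (simp add: nn_integral_suminf)
  finally show ?thesis .
qed

lemma prob_partial_sum_nonpos: "n \<ge> 1 \<Longrightarrow> (\<integral>\<^sup>+\<omega>. indicator {..0} (partial_sum n \<omega>) \<partial>M) = 0"
  using distributed_nn_integral[OF distributed_block_sum[of n 0], of "indicator {..0}"]
  by (simp add: partial_sum_eq_block_sum nn_integral_erlang_density erlang_CDF_at0)

text \<open>Splitting \<open>2^-max(j, k, m) \<le> \<rho>^j \<rho>^k \<rho>^m\<close> with \<open>\<rho>^3 = 1/2\<close> makes the double series
  geometric; since \<open>m \<ge> 6\<mu>t\<close>, the remaining factor \<open>e^(\<mu>t) \<rho>^m\<close> is at most
  \<open>e^((1 - 2 ln 2) \<mu>t)\<close>.\<close>
lemma nn_integral_kappa_square_tail_le_exp: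
  assumes "0 \<le> t" and "1 \<le> \<mu>"
  defines "\<rho> \<equiv> exp (- ln 2 / 3)"
  shows "(\<integral>\<^sup>+\<omega>. ennreal (indicator {\<omega>'. real (kappa X \<mu> t \<omega>') \<ge> 6 * real \<mu> * t} \<omega> *
      (real (kappa X \<mu> t \<omega>))\<^sup>2) \<partial>M)
    \<le> ennreal (exp ((1 - 2 * ln 2) * t) ^ \<mu> * (\<rho> / (1 - \<rho>)) * (\<rho> / (1 - \<rho>)))"
proof -
  have \<rho>: "0 < \<rho>" "\<rho> < 1"
    by (simp_all add: \<rho>_def)
  have \<rho>_cube: "\<rho> ^ 3 = 1 / 2"
    unfolding \<rho>_def exp_of_nat_mult[symmetric] by (simp add: exp_minus)
  define g where "g = \<rho> / (1 - \<rho>)"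
  have "0 \<le> g"
    using \<rho> by (simp add: g_def)
  have geometric: "(\<Sum>j. ennreal (\<rho> ^ Suc j)) = ennreal g"
    unfolding g_def using \<rho> by (intro suminf_ennreal_geometric_Suc) auto
  define m where "m = nat \<lceil>6 * real \<mu> * t\<rceil>"
  define A where "A = exp (real \<mu> * t) * \<rho> ^ m"
  have "0 \<le> A"
    unfolding A_def using \<rho>(1) by (intro mult_nonneg_nonneg zero_le_power) auto
  have "(\<integral>\<^sup>+\<omega>. ennreal (indicator {\<omega>'. real (kappa X \<mu> t \<omega>') \<ge> 6 * real \<mu> * t} \<omega> *
      (real (kappa X \<mu> t \<omega>))\<^sup>2) \<partial>M)
    \<le> (\<Sum>j. \<Sum>k. \<integral>\<^sup>+\<omega>. indicator {..real \<mu> * t} (partial_sum (max (max (Suc j) (Suc k)) m) \<omega>) \<partial>M)"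
    unfolding m_def using assms by (intro nn_integral_kappa_square_tail_le) auto
  also have "\<dots> \<le> (\<Sum>j. \<Sum>k. ennreal A * ennreal (\<rho> ^ Suc j) * ennreal (\<rho> ^ Suc k))"
  proof (intro suminf_le summableI order.trans[OF prob_partial_sum_le_exp])
    fix j k
    have "(1 / 2) ^ max (max (Suc j) (Suc k)) m \<le> \<rho> ^ Suc j * \<rho> ^ Suc k * \<rho> ^ m"
      by (rule half_power_max_le[OF \<rho> \<rho>_cube])
    then have "exp (real \<mu> * t) * (1 / 2) ^ max (max (Suc j) (Suc k)) m \<le>
        exp (real \<mu> * t) * (\<rho> ^ Suc j * \<rho> ^ Suc k * \<rho> ^ m)"
      by (rule mult_left_mono) simp
    then have "exp (real \<mu> * t) * (1 / 2) ^ max (max (Suc j) (Suc k)) m \<le> A * \<rho> ^ Suc j * \<rho> ^ Suc k"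
      by (simp add: A_def mult_ac)
    then show "ennreal (exp (real \<mu> * t) * (1 / 2) ^ max (max (Suc j) (Suc k)) m)
        \<le> ennreal A * ennreal (\<rho> ^ Suc j) * ennreal (\<rho> ^ Suc k)"
      using \<open>0 \<le> A\<close> \<rho> by (simp add: ennreal_mult[symmetric] ennreal_leI)
  qed
  also have "\<dots> = ennreal (A * g * g)"
    using \<open>0 \<le> A\<close> \<open>0 \<le> g\<close>
    by (simp add: geometric ennreal_mult del: power_Suc)
  also have "\<dots> \<le> ennreal (exp ((1 - 2 * ln 2) * t) ^ \<mu> * g * g)"
    unfolding A_def \<rho>_def using \<open>0 \<le> g\<close>
    by (intro ennreal_leI mult_right_mono exp_mult_power_cube_root_half_le) (simp add: m_def, linarith)
  finally show ?thesis
    by (simp add: g_def)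
qed

lemma nn_integral_kappa_square_tail_tendsto_0:
  assumes "0 \<le> t"
  shows "((\<lambda>\<mu>::nat. \<integral>\<^sup>+\<omega>. ennreal (indicator {\<omega>'. real (kappa X \<mu> t \<omega>') \<ge> 6 * real \<mu> * t} \<omega> *
      (real (kappa X \<mu> t \<omega>))\<^sup>2) \<partial>M) \<longlongrightarrow> 0) sequentially"
proof (cases "t = 0")
  case True
  show ?thesis
  proof (rule tendsto_eventually, rule eventually_sequentiallyI[of 1])
    fix \<mu> :: nat
    assume "1 \<le> \<mu>"
    then show "(\<integral>\<^sup>+\<omega>. ennreal (indicator {\<omega>'. real (kappa X \<mu> t \<omega>') \<ge> 6 * real \<mu> * t} \<omega> *
        (real (kappa X \<mu> t \<omega>))\<^sup>2) \<partial>M) = 0"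
      using nn_integral_kappa_square_tail_le[of \<mu> t] True
      by (simp add: prob_partial_sum_nonpos)
  qed
next
  case False
  define q where "q = exp ((1 - 2 * ln 2) * t)"
  define C :: real where "C = exp (- ln 2 / 3) / (1 - exp (- ln 2 / 3))"
  have "q < 1"
    using one_less_two_ln_two False assms by (simp add: q_def mult_neg_pos)
  then have "((\<lambda>\<mu>::nat. q ^ \<mu> * C * C) \<longlongrightarrow> 0 * C * C) sequentially"
    by (intro tendsto_intros) (simp add: q_def)
  then have limit: "((\<lambda>\<mu>::nat. ennreal (q ^ \<mu> * C * C)) \<longlongrightarrow> 0) sequentially"
    using tendsto_ennrealI by fastforce
  have "eventually (\<lambda>\<mu>. (\<integral>\<^sup>+\<omega>. ennreal (indicator {\<omega>'. real (kappa X \<mu> t \<omega>') \<ge> 6 * real \<mu> * t} \<omega> *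
      (real (kappa X \<mu> t \<omega>))\<^sup>2) \<partial>M) \<le> ennreal (q ^ \<mu> * C * C)) sequentially"
    unfolding q_def C_def using nn_integral_kappa_square_tail_le_exp[OF assms]
    by (rule eventually_sequentiallyI)
  then show ?thesis
    by (rule tendsto_sandwich[OF always_eventually[OF allI[OF zero_le]] _ tendsto_const limit])
qed

end

theorem lemma3p3:
  fixes M :: "'a measure" and X :: "nat \<Rightarrow> 'a \<Rightarrow> real"
  assumes "prob_space M"
    and "prob_space.indep_vars M (\<lambda>_. borel) X {1..}"
    and "\<And>i. i \<ge> 1 \<Longrightarrow> distributed M lborel (X i) (exponential_density 1)"
  shows "(\<exists>C::real. \<forall>\<mu>::nat. \<forall>s t::real. \<mu> > 0 \<longrightarrow> 0 \<le> s \<longrightarrow> s \<le> t \<longrightarrow>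
            ennreal (1 / (real \<mu>)\<^sup>2) *
              (\<integral>\<^sup>+ \<omega>. ennreal (\<bar>real (kappa X \<mu> t \<omega>) - real (kappa X \<mu> s \<omega>)\<bar> *
                  (\<Sum>k\<in>{kappa X \<mu> s \<omega>..<kappa X \<mu> t \<omega>}. (X (k + 1) \<omega>)\<^sup>2)) \<partial>M)
            \<le> ennreal (C * (sqrt \<bar>t - s\<bar> + \<bar>t - s\<bar>\<^sup>2)))
       \<and> (\<forall>t::real. t \<ge> 0 \<longrightarrow>
            ((\<lambda>\<mu>::nat. \<integral>\<^sup>+ \<omega>. ennreal (indicator {\<omega>'. real (kappa X \<mu> t \<omega>') \<ge> 6 * real \<mu> * t} \<omega>
                 * (real (kappa X \<mu> t \<omega>))\<^sup>2) \<partial>M) \<longlongrightarrow> 0) sequentially)"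
proof -
  interpret iid_exponential M X
    using assms unfolding iid_exponential_def iid_exponential_axioms_def by blast
  show ?thesis
    using nn_integral_kappa_increment_le nn_integral_kappa_square_tail_tendsto_0 by blast
qed

end
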